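(* Let $a_1,\ldots,a_k$ be positive integers, $A=\sum_{j=1}^k a_j$, $n=k+3$, and $v=[4A+2;\,8a_1,\ldots,8a_k,\,1,\,1,\,1]$ (players $1,\ldots,n$). Let $v_{\&\{n-1,n\}}$ be the game in which players $n-1$ and $n$ merge into one player $\&\{n-1,n\}$ of weight $2$. Then $\phi_{\&\{n-1,n\}}(v_{\&\{n-1,n\}})>\phi_{n-1}(v)+\phi_n(v)$ if and only if there is a set $P\subseteq\{1,\ldots,k\}$ with $\sum_{j\in P}a_j=\sum_{j\notin P}a_j$.
   Context: A weighted voting game $[q;w_1,\ldots,w_n]$ has players $1,\ldots,n$ with nonnegative weights and quota $q$, $0<q\le\sum_jw_j$; $v(S)=1$ iff $\sum_{j\in S}w_j\ge q$, else $0$. The Shapley–Shubik index of player $j$ in a game with player set $M$, $|M|=m$, is $\phi_j=\frac{1}{m!}\sum_{X\subseteq M,\,j\in X}(|X|-1)!\,(m-|X|)!\,(v(X)-v(X\setminus\{j\}))$. Merging a set $T$ of players yields the WVG with the same quota in which the players of $T$ are replaced by a single player $\&T$ of weight $\sum_{j\in T}w_j$. *)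

theory Defs
  imports Complex_Main
begin

definition wvg :: "real \<Rightarrow> ('a \<Rightarrow> real) \<Rightarrow> 'a set \<Rightarrow> real" where
  "wvg q w S = (if sum w S \<ge> q then 1 else 0)"

definition shapley :: "'a set \<Rightarrow> ('a set \<Rightarrow> real) \<Rightarrow> 'a \<Rightarrow> real" where
  "shapley M v j =
     (\<Sum>X\<in>{X. X \<subseteq> M \<and> j \<in> X}.
        fact (card X - 1) * fact (card M - card X) * (v X - v (X - {j}))) / fact (card M)"

text \<open>Merging a set T of players: the players of M - T are kept (as Some j),
  and T is replaced by the single new player None (= &T) of weight sum w T.\<close>
definition merge_players :: "'a set \<Rightarrow> 'a set \<Rightarrow> 'a option set" where
  "merge_players M T = Some ` (M - T) \<union> {None}"

definition merge_weight :: "('a \<Rightarrow> real) \<Rightarrow> 'a set \<Rightarrow> 'a option \<Rightarrow> real" where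
  "merge_weight w T x = (case x of None \<Rightarrow> sum w T | Some j \<Rightarrow> w j)"

end

theory Submission imports Defs begin

(* Every big player j \<le> k has weight 8 a_j, and the three unit players
   together weigh at most 3.  Hence a coalition consisting of big players Y (with
   s = sum a Y) and small weight t \<le> 3 wins against the quota 4A + 2 iff 2s > A, or
   2s = A and t \<ge> 2.  A small player (or the merged player of weight 2) is therefore
   pivotal exactly when the big players of the coalition form a half-sum set Y
   (2 sum a Y = A) and the small weight rises from below 2 to at least 2.

   We first rewrite the Shapley-Shubik index as a sum over the coalitions not
   containing the player, then split such coalitions into their big part Y and
   their small part.  This gives, for both games, a sum over Y \<subseteq> {1..k} whose
   terms vanish unless Y is a half-sum set.  For each half-sum set the merged term
   is strictly larger than the sum of the two original terms (a factorial inequality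
   that reduces to 4(m+1)(d+1) < (m+d+2)(m+d+3) for |Y| = m and d = k - m), which
   yields the equivalence. *)

text \<open>The Shapley-Shubik index as a sum over coalitions Y not containing j,
  weighted by the number of orderings in which exactly Y precedes j.\<close>
lemma shapley_Pow:
  assumes "finite M" "j \<in> M"
  shows "shapley M v j
    = (\<Sum>Y\<in>Pow (M - {j}). fact (card Y) * fact (card M - card Y - 1) * (v (insert j Y) - v Y))
        / fact (card M)"
proof -
  have bij: "bij_betw (insert j) (Pow (M - {j})) {X. X \<subseteq> M \<and> j \<in> X}"
    by (rule bij_betw_byWitness[where f' = "\<lambda>X. X - {j}"]) (use assms in auto)
  have summand: "fact (card (insert j Y) - 1) * fact (card M - card (insert j Y))
                * (v (insert j Y) - v (insert j Y - {j}))
            = fact (card Y) * fact (card M - card Y - 1) * (v (insert j Y) - v Y)"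
    if "Y \<in> Pow (M - {j})" for Y :: "'a set"
  proof -
    have "finite Y" "j \<notin> Y" using that assms(1) finite_subset by auto
    then show ?thesis by simp
  qed
  have "(\<Sum>X\<in>{X. X \<subseteq> M \<and> j \<in> X}.
          fact (card X - 1) * fact (card M - card X) * (v X - v (X - {j})))
      = (\<Sum>Y\<in>Pow (M - {j}). fact (card (insert j Y) - 1) * fact (card M - card (insert j Y))
                * (v (insert j Y) - v (insert j Y - {j})))"
    by (rule sum.reindex_bij_betw[OF bij, symmetric])
  also have "\<dots> = (\<Sum>Y\<in>Pow (M - {j}). fact (card Y) * fact (card M - card Y - 1) * (v (insert j Y) - v Y))"
    by (rule sum.cong[OF refl summand])
  finally show ?thesis unfolding shapley_def by simp
qed

lemma sum_Pow_insert:
  assumes "finite A" "a \<notin> A"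
  shows "(\<Sum>T\<in>Pow (insert a A). g T) = (\<Sum>T\<in>Pow A. g T + g (insert a T))"
proof -
  have inj: "inj_on (insert a) (Pow A)"
    using assms(2) unfolding inj_on_def by auto
  have "(\<Sum>T\<in>Pow (insert a A). g T) = (\<Sum>T\<in>Pow A. g T) + (\<Sum>T\<in>insert a ` Pow A. g T)"
    unfolding Pow_insert by (rule sum.union_disjoint) (use assms in auto)
  also have "(\<Sum>T\<in>insert a ` Pow A. g T) = (\<Sum>T\<in>Pow A. g (insert a T))"
    using sum.reindex[OF inj] by simp
  finally show ?thesis by (simp add: sum.distrib)
qed

lemma sum_Pow_image:
  assumes "inj_on f A"
  shows "(\<Sum>T\<in>Pow (f ` A). g T) = (\<Sum>T\<in>Pow A. g (f ` T))"
  by (rule sum.reindex_bij_betw[symmetric])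
     (rule bij_betw_image_Pow[OF bij_betw_imageI[OF assms refl]])

lemma sum_less_iff_ex:
  fixes F H :: "'a \<Rightarrow> real"
  assumes "finite S"
    and "\<And>x. x \<in> S \<Longrightarrow> \<not> G x \<Longrightarrow> H x = F x"
    and "\<And>x. x \<in> S \<Longrightarrow> G x \<Longrightarrow> H x < F x"
  shows "sum H S < sum F S \<longleftrightarrow> (\<exists>x\<in>S. G x)"
proof
  assume "sum H S < sum F S"
  then show "\<exists>x\<in>S. G x"
    using sum.cong[of S S H F] assms(2) by (metis less_irrefl)
next
  assume "\<exists>x\<in>S. G x"
  moreover have "\<forall>x\<in>S. H x \<le> F x"
    using assms(2,3) by (metis less_imp_le order_refl)
  ultimately show "sum H S < sum F S"
    using assms(1,3) by (intro sum_strict_mono_ex1) auto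
qed

lemma wvg_threshold:
  fixes A s t :: nat
  assumes "sum w Z = 8 * real s + real t" "t \<le> 3"
  shows "wvg (4 * real A + 2) w Z = (if A < 2 * s \<or> (2 * s = A \<and> 2 \<le> t) then 1 else 0)"
proof -
  have "(4 * real A + 2 \<le> 8 * real s + real t) \<longleftrightarrow> 4 * A + 2 \<le> 8 * s + t"
    by linarith
  also have "\<dots> \<longleftrightarrow> A < 2 * s \<or> (2 * s = A \<and> 2 \<le> t)"
    using assms(2) by presburger
  finally show ?thesis unfolding wvg_def assms(1) by simp
qed

lemma wvg_marginal:
  fixes A s t u :: nat
  assumes "finite Z" "p \<notin> Z" "sum w Z = 8 * real s + real t" "w p = real u" "t + u \<le> 3"
  shows "wvg (4 * real A + 2) w (insert p Z) - wvg (4 * real A + 2) w Z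
    = (if 2 * s = A \<and> t < 2 \<and> 2 \<le> t + u then 1 else 0)"
proof -
  have weight_with_p: "sum w (insert p Z) = 8 * real s + real (t + u)"
    using assms by (simp add: sum.insert)
  show ?thesis
    using wvg_threshold[OF weight_with_p] wvg_threshold[OF assms(3)] assms(5) by auto
qed

lemma sum_big_weights:
  assumes "\<forall>j\<le>k. w j = 8 * real (a j)" "Y \<subseteq> {1..k}"
  shows "sum w Y = 8 * real (sum a Y)"
proof -
  have "sum w Y = (\<Sum>j\<in>Y. 8 * real (a j))"
    using assms by (intro sum.cong) auto
  then show ?thesis by (simp add: sum_distrib_left)
qed

text \<open>The index of a unit player p in the original game (b and c are the other two
  unit players).  Only the coalitions Y + b and Y + c, for half-sum sets Y, count.\<close>
lemma shapley_unit_player: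
  fixes k A :: nat and a :: "nat \<Rightarrow> nat" and b c p :: nat and w :: "nat \<Rightarrow> real"
  assumes M: "{1..k+3} - {p} = insert b (insert c {1..k})" and p: "k < p" "p \<le> k+3"
    and bc: "k < b" "k < c" "b \<noteq> c"
    and w1: "w b = 1" "w c = 1" "w p = 1" and w8: "\<forall>j\<le>k. w j = 8 * real (a j)"
  shows "shapley {1..k+3} (wvg (4 * real A + 2) w) p
     = (\<Sum>Y\<in>Pow {1..k}. if 2 * sum a Y = A
          then 2 * fact (card Y + 1) * fact (k + 1 - card Y) else 0) / fact (k+3)"
proof -
  let ?v = "wvg (4 * real A + 2) w"
  have pbc: "p \<noteq> b" "p \<noteq> c" using M by auto
  define g where "g Z = fact (card Z) * fact (card {1..k+3} - card Z - 1) * (?v (insert p Z) - ?v Z)"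
    for Z
  have "shapley {1..k+3} ?v p = (\<Sum>Z\<in>Pow ({1..k+3} - {p}). g Z) / fact (card {1..k+3})"
    unfolding g_def using p by (intro shapley_Pow) auto
  also have "\<dots> = (\<Sum>Z\<in>Pow (insert b (insert c {1..k})). g Z) / fact (k+3)"
    unfolding M by (simp add: add_ac)
  also have "(\<Sum>Z\<in>Pow (insert b (insert c {1..k})). g Z)
      = (\<Sum>T\<in>Pow (insert c {1..k}). g T + g (insert b T))"
    by (rule sum_Pow_insert) (use bc in auto)
  also have "\<dots> = (\<Sum>Y\<in>Pow {1..k}. (g Y + g (insert b Y)) + (g (insert c Y) + g (insert b (insert c Y))))"
    by (rule sum_Pow_insert) (use bc in auto)
  also have "\<dots> = (\<Sum>Y\<in>Pow {1..k}. if 2 * sum a Y = A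
                     then 2 * fact (card Y + 1) * fact (k + 1 - card Y) else 0)"
  proof (rule sum.cong[OF refl])
    fix Y assume "Y \<in> Pow {1..k}"
    then have Y: "Y \<subseteq> {1..k}" by simp
    then have fin: "finite Y" and ni: "b \<notin> Y" "c \<notin> Y" "p \<notin> Y" and cY: "card Y \<le> k"
      using bc p finite_subset card_mono[OF _ Y] by auto
    have sY: "sum w Y = 8 * real (sum a Y) + real (0::nat)"
      using sum_big_weights[OF w8 Y] by simp
    have sbY: "sum w (insert b Y) = 8 * real (sum a Y) + real (1::nat)"
      and scY: "sum w (insert c Y) = 8 * real (sum a Y) + real (1::nat)"
      and sbcY: "sum w (insert b (insert c Y)) = 8 * real (sum a Y) + real (2::nat)"
      using sY fin ni bc w1 by simp_all
    have wp: "w p = real (1::nat)" using w1 by simp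
    note marg = wvg_marginal[where A = A and w = w and p = p, OF _ _ _ wp]
    have "?v (insert p Y) - ?v Y = 0"
      using marg[OF fin ni(3) sY] by simp
    moreover have "?v (insert p (insert b (insert c Y))) - ?v (insert b (insert c Y)) = 0"
      using marg[OF _ _ sbcY] fin ni pbc by simp
    moreover have "?v (insert p (insert b Y)) - ?v (insert b Y) = (if 2 * sum a Y = A then 1 else 0)"
      using marg[OF _ _ sbY] fin ni pbc by simp
    moreover have "?v (insert p (insert c Y)) - ?v (insert c Y) = (if 2 * sum a Y = A then 1 else 0)"
      using marg[OF _ _ scY] fin ni pbc by simp
    moreover have "card (insert b Y) = card Y + 1" "card (insert c Y) = card Y + 1"
      using fin ni by simp_all
    moreover have "k + 3 - (card Y + 1) - 1 = k + 1 - card Y"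
      using cY by simp
    ultimately show "(g Y + g (insert b Y)) + (g (insert c Y) + g (insert b (insert c Y)))
       = (if 2 * sum a Y = A then 2 * fact (card Y + 1) * fact (k + 1 - card Y) else 0)"
      unfolding g_def by simp
  qed
  finally show ?thesis .
qed

text \<open>The index of the merged player of weight 2.  Here both coalitions Y and
  Y + (k+1) are pivotal for every half-sum set Y.\<close>
lemma shapley_merged_player:
  fixes k A :: nat and a :: "nat \<Rightarrow> nat" and w :: "nat \<Rightarrow> real"
  assumes w1: "w (k+1) = 1" "w (k+2) = 1" "w (k+3) = 1" and w8: "\<forall>j\<le>k. w j = 8 * real (a j)"
  shows "shapley (merge_players {1..k+3} {k+2, k+3})
                 (wvg (4 * real A + 2) (merge_weight w {k+2, k+3})) None
     = (\<Sum>Y\<in>Pow {1..k}. if 2 * sum a Y = A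
          then fact (card Y) * fact (k + 1 - card Y) + fact (card Y + 1) * fact (k - card Y)
          else 0) / fact (k+2)"
proof -
  let ?M = "merge_players {1..k+3} {k+2, k+3}"
  let ?mw = "merge_weight w {k+2, k+3}"
  let ?v = "wvg (4 * real A + 2) ?mw"
  have M: "?M = insert None (insert (Some (k+1)) (Some ` {1..k}))"
  proof -
    have "{1..k+3} - {k+2, k+3} = insert (k+1) {1..k}" by auto
    then show ?thesis unfolding merge_players_def by auto
  qed
  have "Some (k+1) \<notin> Some ` {1..k}" by auto
  then have card_M: "card ?M = k + 2" unfolding M by (simp add: card_image)
  define g where "g Z = fact (card Z) * fact (card ?M - card Z - 1) * (?v (insert None Z) - ?v Z)"
    for Z
  have "shapley ?M ?v None = (\<Sum>Z\<in>Pow (?M - {None}). g Z) / fact (card ?M)"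
    unfolding g_def by (rule shapley_Pow) (unfold M, simp_all)
  also have "\<dots> = (\<Sum>Z\<in>Pow (insert (Some (k+1)) (Some ` {1..k})). g Z) / fact (k+2)"
    unfolding card_M unfolding M by auto
  also have "(\<Sum>Z\<in>Pow (insert (Some (k+1)) (Some ` {1..k})). g Z)
      = (\<Sum>T\<in>Pow (Some ` {1..k}). g T + g (insert (Some (k+1)) T))"
    by (rule sum_Pow_insert) auto
  also have "\<dots> = (\<Sum>Y\<in>Pow {1..k}. g (Some ` Y) + g (insert (Some (k+1)) (Some ` Y)))"
    by (rule sum_Pow_image) simp
  also have "\<dots> = (\<Sum>Y\<in>Pow {1..k}. if 2 * sum a Y = A
          then fact (card Y) * fact (k + 1 - card Y) + fact (card Y + 1) * fact (k - card Y)
          else 0)"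
  proof (rule sum.cong[OF refl])
    fix Y assume "Y \<in> Pow {1..k}"
    then have Y: "Y \<subseteq> {1..k}" by simp
    then have fin: "finite (Some ` Y)" and cY: "card Y \<le> k"
      using finite_subset card_mono[OF _ Y] by auto
    have ni: "None \<notin> Some ` Y" "Some (k+1) \<notin> Some ` Y" using Y by auto
    have card_SY: "card (Some ` Y) = card Y" by (simp add: card_image)
    have sY: "sum ?mw (Some ` Y) = 8 * real (sum a Y) + real (0::nat)"
      using sum_big_weights[OF w8 Y] by (simp add: sum.reindex merge_weight_def)
    have s1Y: "sum ?mw (insert (Some (k+1)) (Some ` Y)) = 8 * real (sum a Y) + real (1::nat)"
      using sY fin ni w1 by (simp add: merge_weight_def)
    have wN: "?mw None = real (2::nat)" using w1 by (simp add: merge_weight_def)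
    note marg = wvg_marginal[where A = A and w = ?mw and p = None, OF _ _ _ wN]
    have "?v (insert None (Some ` Y)) - ?v (Some ` Y) = (if 2 * sum a Y = A then 1 else 0)"
      using marg[OF fin ni(1) sY] by simp
    moreover have "?v (insert None (insert (Some (k+1)) (Some ` Y)))
                     - ?v (insert (Some (k+1)) (Some ` Y)) = (if 2 * sum a Y = A then 1 else 0)"
      using marg[OF _ _ s1Y] fin ni by simp
    moreover have "card (insert (Some (k+1)) (Some ` Y)) = card Y + 1"
      using fin ni card_SY by simp
    moreover have "k + 2 - (card Y + 1) - 1 = k - card Y" "k + 2 - card Y - 1 = k + 1 - card Y"
      using cY by simp_all
    ultimately show "g (Some ` Y) + g (insert (Some (k+1)) (Some ` Y))
       = (if 2 * sum a Y = A
          then fact (card Y) * fact (k + 1 - card Y) + fact (card Y + 1) * fact (k - card Y)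
          else 0)"
      unfolding g_def card_M card_SY by simp
  qed
  finally show ?thesis .
qed

text \<open>With d = k - m this is
  4 (m+1) (d+1) < (m+d+2) (m+d+3), which follows from (m - d)^2 \<ge> 0.\<close>
lemma pivot_weight_less:
  assumes "m \<le> k"
  shows "4 * fact (m + 1) * fact (k + 1 - m) / fact (k + 3)
       < (fact m * fact (k + 1 - m) + fact (m + 1) * fact (k - m)) / (fact (k + 2) :: real)"
proof -
  obtain d where k: "k = m + d" using assms le_Suc_ex by blast
  define P :: real where "P = fact m * fact d"
  define F :: real where "F = fact (m + d + 2)"
  have "P > 0" "F > 0" unfolding P_def F_def by auto
  have fact_m1: "fact (m + 1) = (real m + 1) * fact m"
    and fact_d1: "fact (d + 1) = (real d + 1) * fact d"
    and fact_k3: "fact (m + d + 3) = (real m + real d + 3) * F"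
    unfolding F_def by (simp_all add: add.commute fact_Suc[symmetric] numeral_3_eq_3)
  have square_bound: "4 * (real m + 1) * (real d + 1) < (real m + real d + 2) * (real m + real d + 3)"
  proof -
    have "0 \<le> (real m - real d)^2" by simp
    then show ?thesis by (simp add: power2_eq_square algebra_simps)
  qed
  have lhs: "4 * fact (m + 1) * fact (k + 1 - m) / fact (k + 3)
           = P * (4 * (real m + 1) * (real d + 1)) / ((real m + real d + 3) * F)"
    unfolding k P_def using fact_m1 fact_d1 fact_k3 by (simp add: algebra_simps)
  have rhs: "(fact m * fact (k + 1 - m) + fact (m + 1) * fact (k - m)) / (fact (k + 2) :: real)
           = P * (real m + real d + 2) / F"
    unfolding k P_def F_def using fact_m1 fact_d1 by (simp add: algebra_simps)
  have "4 * (real m + 1) * (real d + 1) / (real m + real d + 3) < real m + real d + 2"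
    using square_bound by (simp add: pos_divide_less_eq)
  then have "P / F * (4 * (real m + 1) * (real d + 1) / (real m + real d + 3))
           < P / F * (real m + real d + 2)"
    using \<open>P > 0\<close> \<open>F > 0\<close> by (intro mult_strict_left_mono) simp_all
  then show ?thesis unfolding lhs rhs by (simp add: field_simps)
qed

lemma even_split_iff_half:
  fixes a :: "'a \<Rightarrow> nat"
  assumes "finite K" "P \<subseteq> K"
  shows "sum a P = sum a (K - P) \<longleftrightarrow> 2 * sum a P = sum a K"
  using sum.subset_diff[OF assms(2,1), of a] by simp

theorem mainTheorem11:
  fixes k :: nat and a :: "nat \<Rightarrow> nat" and A :: nat and n :: nat and w :: "nat \<Rightarrow> real"
    and q :: real
  assumes apos: "\<forall>j\<in>{1..k}. a j > 0"
  defines "A \<equiv> (\<Sum>j=1..k. a j)"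
      and "n \<equiv> k + 3"
      and "w \<equiv> (\<lambda>j. if j \<le> k then 8 * real (a j) else 1)"
      and "q \<equiv> 4 * real A + 2"
  shows "shapley (merge_players {1..n} {n-1, n}) (wvg q (merge_weight w {n-1, n})) None
           > shapley {1..n} (wvg q w) (n-1) + shapley {1..n} (wvg q w) n
         \<longleftrightarrow> (\<exists>P\<subseteq>{1..k}. (\<Sum>j\<in>P. a j) = (\<Sum>j\<in>{1..k}-P. a j))"
proof -
  have w1: "w (k+1) = 1" "w (k+2) = 1" "w (k+3) = 1" and w8: "\<forall>j\<le>k. w j = 8 * real (a j)"
    unfolding w_def by simp_all
  have players: "n - 1 = k + 2" "n = k + 3" unfolding n_def by simp_all
  define half where "half Y \<longleftrightarrow> 2 * sum a Y = A" for Y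
  define merged where "merged Y = (if half Y then (fact (card Y) * fact (k + 1 - card Y)
      + fact (card Y + 1) * fact (k - card Y)) / fact (k + 2) else (0::real))" for Y
  define units where "units Y = (if half Y
      then 4 * fact (card Y + 1) * fact (k + 1 - card Y) / fact (k + 3) else (0::real))" for Y
  have merged_index: "shapley (merge_players {1..n} {n-1, n}) (wvg q (merge_weight w {n-1, n})) None
      = (\<Sum>Y\<in>Pow {1..k}. merged Y)"
    unfolding players(1) unfolding players(2) q_def shapley_merged_player[OF w1 w8] merged_def half_def sum_divide_distrib
    by (intro sum.cong) auto
  let ?unit = "(\<Sum>Y\<in>Pow {1..k}. if 2 * sum a Y = A
                 then 2 * fact (card Y + 1) * fact (k + 1 - card Y) else 0) / fact (k+3)"
  have "shapley {1..k+3} (wvg q w) (k+2) = ?unit"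
    unfolding q_def by (rule shapley_unit_player[of k _ "k+1" "k+3"]) (use w1 w8 in auto)
  moreover have "shapley {1..k+3} (wvg q w) (k+3) = ?unit"
    unfolding q_def by (rule shapley_unit_player[of k _ "k+1" "k+2"]) (use w1 w8 in auto)
  ultimately have unit_indices: "shapley {1..n} (wvg q w) (n-1) + shapley {1..n} (wvg q w) n
      = (\<Sum>Y\<in>Pow {1..k}. units Y)"
    unfolding players(1) unfolding players(2) units_def half_def
    by (simp add: sum_divide_distrib flip: sum.distrib add_divide_distrib)
       (intro sum.cong, simp_all)
  have compare: "(\<Sum>Y\<in>Pow {1..k}. units Y) < (\<Sum>Y\<in>Pow {1..k}. merged Y)
      \<longleftrightarrow> (\<exists>Y\<in>Pow {1..k}. half Y)"
  proof (rule sum_less_iff_ex)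
    fix Y assume "Y \<in> Pow {1..k}" "half Y"
    then have "card Y \<le> k" using card_mono[of "{1..k}" Y] by simp
    then show "units Y < merged Y"
      unfolding units_def merged_def if_P[OF \<open>half Y\<close>] by (rule pivot_weight_less)
  qed (simp_all add: units_def merged_def)
  have even_split: "(\<exists>Y\<in>Pow {1..k}. half Y) \<longleftrightarrow> (\<exists>P\<subseteq>{1..k}. (\<Sum>j\<in>P. a j) = (\<Sum>j\<in>{1..k}-P. a j))"
    unfolding half_def A_def using even_split_iff_half[of "{1..k}" _ a] by auto
  show ?thesis unfolding merged_index unit_indices compare even_split ..
qed

end
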